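(* Let $T_1,T_2$ be $2\times2$ matrices with entries in $\{0,1\}$, neither having a zero row, and let $\alpha_i=T_1^{(i)}\otimes T_2^{(i)}$ for $i=1,2$. If $\alpha_1>\alpha_2$ or $\alpha_2>\alpha_1$, then the associated recurrence system is of dominating type.
   Context: $T_k^{(i)}$ is the $i$-th row of $T_k$ and $(v_1,v_2)\otimes(w_1,w_2)=(v_1w_1,v_1w_2,v_2w_1,v_2w_2)$. For vectors, $v\ge w$ means $v_i\ge w_i$ for every coordinate, and $v>w$ means $v\ge w$ and $v\ne w$. The recurrence system: $\gamma^{[s_j]}_{i,0}=1$ and for $n\ge1$ $$\gamma^{[s_1]}_{i,n}=\sum_{j,k=1}^2T_1(i,j)T_2(i,k)\,\gamma^{[s_1]}_{j,n-1}\gamma^{[s_2]}_{k,n-1},\qquad \gamma^{[s_2]}_{i,n}=\sum_{j=1}^2T_1(i,j)\,\gamma^{[s_1]}_{j,n-1}.$$ The items of $\gamma^{[s_1]}_{i,n}$ are the products $\gamma^{[s_1]}_{j,n-1}\gamma^{[s_2]}_{k,n-1}$ indexed by the pairs $(j,k)$ with $T_1(i,j)T_2(i,k)=1$; the items of $\gamma^{[s_2]}_{i,n}$ are the terms $\gamma^{[s_1]}_{j,n-1}$ indexed by the $j$ with $T_1(i,j)=1$. Thus $\gamma^{[s_j]}_{i,n}=\sum_{l}f^{ij}_{l,n-1}$ where $f^{ij}_{l,n-1}$ is the $l$-th item. $\gamma^{[s_j]}_{i,n}$ has a dominate item if there is an index $r$ such that $f^{ij}_{r,n}\ge f^{ij}_{l,n}$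 for every index $l\ne r$ and every $n\ge1$. The system is of dominating type if each of $\gamma^{[s_1]}_{1,n},\gamma^{[s_1]}_{2,n},\gamma^{[s_2]}_{1,n},\gamma^{[s_2]}_{2,n}$ has a dominate item. *)

theory Defs
  imports Main
begin

text \<open>2x2 matrices are functions nat => nat => nat, used on indices 1 and 2.\<close>

definition zero_one_matrix :: "(nat \<Rightarrow> nat \<Rightarrow> nat) \<Rightarrow> bool" where
  "zero_one_matrix T \<longleftrightarrow> (\<forall>i\<in>{1,2}. \<forall>j\<in>{1,2}. T i j \<in> {0,1})"

definition no_zero_row :: "(nat \<Rightarrow> nat \<Rightarrow> nat) \<Rightarrow> bool" where
  "no_zero_row T \<longleftrightarrow> (\<forall>i\<in>{1,2}. \<exists>j\<in>{1,2}. T i j \<noteq> 0)"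

definition mrow :: "(nat \<Rightarrow> nat \<Rightarrow> nat) \<Rightarrow> nat \<Rightarrow> nat \<times> nat" where
  "mrow T i = (T i 1, T i 2)"

definition tensor2 :: "nat \<times> nat \<Rightarrow> nat \<times> nat \<Rightarrow> nat list" where
  "tensor2 v w = [fst v * fst w, fst v * snd w, snd v * fst w, snd v * snd w]"

definition alpha :: "(nat \<Rightarrow> nat \<Rightarrow> nat) \<Rightarrow> (nat \<Rightarrow> nat \<Rightarrow> nat) \<Rightarrow> nat \<Rightarrow> nat list" where
  "alpha T1 T2 i = tensor2 (mrow T1 i) (mrow T2 i)"

definition vec_ge :: "nat list \<Rightarrow> nat list \<Rightarrow> bool" where
  "vec_ge v w \<longleftrightarrow> length v = length w \<and> (\<forall>i<length v. w ! i \<le> v ! i)"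

definition vec_gt :: "nat list \<Rightarrow> nat list \<Rightarrow> bool" where
  "vec_gt v w \<longleftrightarrow> vec_ge v w \<and> v \<noteq> w"

text \<open>gam T1 T2 n = (gamma^[s1]_{.,n}, gamma^[s2]_{.,n}) as functions of i.\<close>
fun gam :: "(nat \<Rightarrow> nat \<Rightarrow> nat) \<Rightarrow> (nat \<Rightarrow> nat \<Rightarrow> nat) \<Rightarrow> nat \<Rightarrow> (nat \<Rightarrow> nat) \<times> (nat \<Rightarrow> nat)" where
  "gam T1 T2 0 = (\<lambda>i. 1, \<lambda>i. 1)"
| "gam T1 T2 (Suc n) =
     (\<lambda>i. \<Sum>j\<in>{1,2}. \<Sum>k\<in>{1,2}. T1 i j * T2 i k * fst (gam T1 T2 n) j * snd (gam T1 T2 n) k,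
      \<lambda>i. \<Sum>j\<in>{1,2}. T1 i j * fst (gam T1 T2 n) j)"

definition gamma1 where "gamma1 T1 T2 i n = fst (gam T1 T2 n) i"
definition gamma2 where "gamma2 T1 T2 i n = snd (gam T1 T2 n) i"

text \<open>Items of gamma^[s1]_{i,n+1}: indexed by pairs (j,k) with T1(i,j)T2(i,k)=1;
  the item f^{i1}_{(j,k),n} = gamma1_{j,n} gamma2_{k,n}.\<close>
definition items1 :: "(nat \<Rightarrow> nat \<Rightarrow> nat) \<Rightarrow> (nat \<Rightarrow> nat \<Rightarrow> nat) \<Rightarrow> nat \<Rightarrow> (nat \<times> nat) set" where
  "items1 T1 T2 i = {(j,k). j \<in> {1,2} \<and> k \<in> {1,2} \<and> T1 i j * T2 i k = 1}"

definition item1 :: "(nat \<Rightarrow> nat \<Rightarrow> nat) \<Rightarrow> (nat \<Rightarrow> nat \<Rightarrow> nat) \<Rightarrow> nat \<times> nat \<Rightarrow> nat \<Rightarrow> nat" where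
  "item1 T1 T2 l n = gamma1 T1 T2 (fst l) n * gamma2 T1 T2 (snd l) n"

text \<open>Items of gamma^[s2]_{i,n+1}: indexed by j with T1(i,j)=1; item = gamma1_{j,n}.\<close>
definition items2 :: "(nat \<Rightarrow> nat \<Rightarrow> nat) \<Rightarrow> nat \<Rightarrow> nat set" where
  "items2 T1 i = {j. j \<in> {1,2} \<and> T1 i j = 1}"

definition item2 :: "(nat \<Rightarrow> nat \<Rightarrow> nat) \<Rightarrow> (nat \<Rightarrow> nat \<Rightarrow> nat) \<Rightarrow> nat \<Rightarrow> nat \<Rightarrow> nat" where
  "item2 T1 T2 j n = gamma1 T1 T2 j n"

definition has_dominate_item :: "'a set \<Rightarrow> ('a \<Rightarrow> nat \<Rightarrow> nat) \<Rightarrow> bool" where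
  "has_dominate_item L f \<longleftrightarrow>
     (\<exists>r\<in>L. \<forall>n\<ge>1. \<forall>l\<in>L. l \<noteq> r \<longrightarrow> f l n \<le> f r n)"

definition dominating_type :: "(nat \<Rightarrow> nat \<Rightarrow> nat) \<Rightarrow> (nat \<Rightarrow> nat \<Rightarrow> nat) \<Rightarrow> bool" where
  "dominating_type T1 T2 \<longleftrightarrow>
     (\<forall>i\<in>{1,2}. has_dominate_item (items1 T1 T2 i) (item1 T1 T2)
               \<and> has_dominate_item (items2 T1 i) (item2 T1 T2))"

end

theory Submission
  imports Defs
begin

text \<open>
  Say \<open>\<alpha>\<^sub>p \<ge> \<alpha>\<^sub>q\<close> with \<open>{p,q} = {1,2}\<close>.  Since the
  entries are 0 or 1 and no row vanishes, row \<open>q\<close> of both \<open>T\<^sub>1\<close> and \<open>T\<^sub>2\<close> lies below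
  row \<open>p\<close>.  The recurrence is monotone in the rows, so both gamma sequences at index \<open>q\<close>
  stay below those at index \<open>p\<close>.  The items of \<open>\<gamma>\<^sup>s\<^sup>2\<^sub>i\<^sub>,\<^sub>n\<close> are indexed by the
  nonempty support of row \<open>i\<close> of \<open>T\<^sub>1\<close>: either \<open>p\<close> lies in it and dominates, or it is
  the singleton \<open>{q}\<close>.  The items of \<open>\<gamma>\<^sup>s\<^sup>1\<^sub>i\<^sub>,\<^sub>n\<close> are indexed by the product of
  the supports of row \<open>i\<close> of \<open>T\<^sub>1\<close> and of \<open>T\<^sub>2\<close>, and a pair of dominating indices
  dominates the products.
\<close>

lemma zero_one_matrix_le_1:
  assumes "zero_one_matrix T" "i \<in> {1,2}" "j \<in> {1,2}"
  shows "T i j \<le> 1"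
  using assms unfolding zero_one_matrix_def by fastforce

lemma row_has_one:
  assumes "zero_one_matrix T" "no_zero_row T" "i \<in> {1,2}"
  obtains j where "j \<in> {1,2}" "T i j = 1"
  using assms unfolding zero_one_matrix_def no_zero_row_def by fastforce

lemma vec_ge_alpha_iff:
  "vec_ge (alpha T1 T2 p) (alpha T1 T2 q) \<longleftrightarrow>
     (\<forall>a\<in>{1,2}. \<forall>b\<in>{1,2}. T1 q a * T2 q b \<le> T1 p a * T2 p b)"
  by (simp add: vec_ge_def alpha_def tensor2_def mrow_def less_Suc_eq numeral_eq_Suc all_conj_distrib)

lemma rows_le_if_vec_ge_alpha:
  assumes "vec_ge (alpha T1 T2 p) (alpha T1 T2 q)"
    and "zero_one_matrix T1" "zero_one_matrix T2" "no_zero_row T1" "no_zero_row T2"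
    and "p \<in> {1,2}" "q \<in> {1,2}"
  shows "\<forall>j\<in>{1,2}. T1 q j \<le> T1 p j" and "\<forall>k\<in>{1,2}. T2 q k \<le> T2 p k"
proof -
  have prod_le: "T1 q a * T2 q b \<le> T1 p a * T2 p b" if "a \<in> {1,2}" "b \<in> {1,2}" for a b
    using assms(1) that unfolding vec_ge_alpha_iff by blast
  obtain a where a: "a \<in> {1,2}" "T1 q a = 1"
    using row_has_one[OF assms(2,4,7)] .
  obtain b where b: "b \<in> {1,2}" "T2 q b = 1"
    using row_has_one[OF assms(3,5,7)] .
  show "\<forall>j\<in>{1,2}. T1 q j \<le> T1 p j"
  proof
    fix j :: nat assume j: "j \<in> {1,2}"
    have "T1 q j \<le> T1 p j * T2 p b" using prod_le[OF j b(1)] b(2) by simp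
    also have "\<dots> \<le> T1 p j" using zero_one_matrix_le_1[OF assms(3,6) b(1)] by simp
    finally show "T1 q j \<le> T1 p j" .
  qed
  show "\<forall>k\<in>{1,2}. T2 q k \<le> T2 p k"
  proof
    fix k :: nat assume k: "k \<in> {1,2}"
    have "T2 q k \<le> T1 p a * T2 p k" using prod_le[OF a(1) k] a(2) by simp
    also have "\<dots> \<le> T2 p k" using zero_one_matrix_le_1[OF assms(2,6) a(1)] by simp
    finally show "T2 q k \<le> T2 p k" .
  qed
qed

lemma gamma1_0 [simp]: "gamma1 T1 T2 i 0 = 1"
  and gamma2_0 [simp]: "gamma2 T1 T2 i 0 = 1"
  by (simp_all add: gamma1_def gamma2_def)

lemma gamma1_Suc:
  "gamma1 T1 T2 i (Suc n) =
     (\<Sum>j\<in>{1,2}. \<Sum>k\<in>{1,2}. T1 i j * T2 i k * gamma1 T1 T2 j n * gamma2 T1 T2 k n)"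
  by (simp add: gamma1_def gamma2_def del: insert_iff)

lemma gamma2_Suc:
  "gamma2 T1 T2 i (Suc n) = (\<Sum>j\<in>{1,2}. T1 i j * gamma1 T1 T2 j n)"
  by (simp add: gamma1_def gamma2_def del: insert_iff)

lemma gamma1_le_if_rows_le:
  assumes "\<forall>j\<in>{1,2}. T1 q j \<le> T1 p j" and "\<forall>k\<in>{1,2}. T2 q k \<le> T2 p k"
  shows "gamma1 T1 T2 q n \<le> gamma1 T1 T2 p n"
proof (cases n)
  case (Suc m)
  show ?thesis
    unfolding Suc gamma1_Suc using assms
    by (intro sum_mono mult_right_mono mult_mono) auto
qed simp

lemma gamma2_le_if_row_le:
  assumes "\<forall>j\<in>{1,2}. T1 q j \<le> T1 p j"
  shows "gamma2 T1 T2 q n \<le> gamma2 T1 T2 p n"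
proof (cases n)
  case (Suc m)
  show ?thesis
    unfolding Suc gamma2_Suc using assms by (intro sum_mono mult_right_mono) auto
qed simp

lemma has_dominate_item_if_subset_pair:
  assumes "L \<subseteq> {p,q}" "L \<noteq> {}" "\<And>n. f q n \<le> f p n"
  shows "has_dominate_item L f"
proof (cases "p \<in> L")
  case True
  then show ?thesis using assms unfolding has_dominate_item_def by blast
next
  case False
  then have "L = {q}" using assms(1,2) by blast
  then show ?thesis unfolding has_dominate_item_def by simp
qed

lemma has_dominate_item_Times:
  assumes "has_dominate_item A f" "has_dominate_item B g"
  shows "has_dominate_item (A \<times> B) (\<lambda>l n. f (fst l) n * g (snd l) n)"
proof -
  obtain r where r: "r \<in> A" "\<And>a n. a \<in> A \<Longrightarrow> n \<ge> 1 \<Longrightarrow> f a n \<le> f r n"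
    using assms(1) unfolding has_dominate_item_def by (metis order_refl)
  obtain s where s: "s \<in> B" "\<And>b n. b \<in> B \<Longrightarrow> n \<ge> 1 \<Longrightarrow> g b n \<le> g s n"
    using assms(2) unfolding has_dominate_item_def by (metis order_refl)
  show ?thesis
    unfolding has_dominate_item_def
    using r s by (intro bexI[of _ "(r, s)"]) (auto intro: mult_le_mono)
qed

lemma items1_eq_Times: "items1 T1 T2 i = items2 T1 i \<times> items2 T2 i"
  by (auto simp: items1_def items2_def)

lemma items2_subset_pair:
  assumes "{p,q} = {1,2}"
  shows "items2 T i \<subseteq> {p,q}"
  using assms by (auto simp: items2_def)

lemma items2_nonempty:
  assumes "zero_one_matrix T" "no_zero_row T" "i \<in> {1,2}"
  shows "items2 T i \<noteq> {}"
  using row_has_one[OF assms] by (auto simp: items2_def)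

theorem proposition2:
  fixes T1 T2 :: "nat \<Rightarrow> nat \<Rightarrow> nat"
  assumes "zero_one_matrix T1" and "zero_one_matrix T2"
    and "no_zero_row T1" and "no_zero_row T2"
    and "vec_gt (alpha T1 T2 1) (alpha T1 T2 2) \<or> vec_gt (alpha T1 T2 2) (alpha T1 T2 1)"
  shows "dominating_type T1 T2"
proof -
  obtain p q where pq: "{p,q} = {1::nat,2}" and ge: "vec_ge (alpha T1 T2 p) (alpha T1 T2 q)"
    using assms(5) unfolding vec_gt_def by blast
  then have "p \<in> {1,2}" "q \<in> {1,2}" by auto
  note rows = rows_le_if_vec_ge_alpha[OF ge assms(1-4) this]
  have dom1: "has_dominate_item (items2 T1 i) (gamma1 T1 T2)"
    and dom2: "has_dominate_item (items2 T2 i) (gamma2 T1 T2)" if "i \<in> {1,2}" for i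
    using has_dominate_item_if_subset_pair items2_subset_pair[OF pq] that
      items2_nonempty[OF assms(1,3)] items2_nonempty[OF assms(2,4)]
      gamma1_le_if_rows_le[OF rows] gamma2_le_if_row_le[OF rows(1)]
    by metis+
  have "item1 T1 T2 = (\<lambda>l n. gamma1 T1 T2 (fst l) n * gamma2 T1 T2 (snd l) n)"
    and "item2 T1 T2 = gamma1 T1 T2"
    by (simp_all add: fun_eq_iff item1_def item2_def)
  then show ?thesis
    unfolding dominating_type_def items1_eq_Times
    by (simp add: dom1 dom2 has_dominate_item_Times)
qed

end
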